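(* Let $n \geq 2$ be an integer. There exists a greatest integer $w$ such that there is an S-template with width $w$ and $n$ colors; denote it $S^+(n)$. Moreover, $$2S(n-1)+1 \leq S^+(n) \leq S(n).$$
   Context: A set $A \subseteq \mathbb{N}$ is sum-free if for all $(a,b)\in A^2$ (allowing $a=b$), $a+b \notin A$. For $n\ge 1$, the Schur number $S(n)$ is the largest integer $p$ such that $\{1,\dots,p\}$ can be partitioned into $n$ sum-free subsets. For positive integers $p,n$, an S-template with $n$ colors and width $p$ is a partition of $\{1,\dots,p\}$ into $n$ sum-free subsets $A_1,\dots,A_n$ such that for every $i \in \{1,\dots,n-1\}$ (i.e. every subset except $A_n$) and all $(x,y)\in A_i^2$: if $x+y>p$ then $x+y-p \notin A_i$. *)

theory Defs
  imports Main
begin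

definition sum_free :: "nat set \<Rightarrow> bool" where
  "sum_free A \<longleftrightarrow> (\<forall>a\<in>A. \<forall>b\<in>A. a + b \<notin> A)"

definition sum_free_partition :: "nat \<Rightarrow> nat \<Rightarrow> (nat \<Rightarrow> nat set) \<Rightarrow> bool" where
  "sum_free_partition n p A \<longleftrightarrow>
     (\<Union>i\<in>{1..n}. A i) = {1..p} \<and>
     (\<forall>i\<in>{1..n}. \<forall>j\<in>{1..n}. i \<noteq> j \<longrightarrow> A i \<inter> A j = {}) \<and>
     (\<forall>i\<in>{1..n}. sum_free (A i))"

definition schur_partitionable :: "nat \<Rightarrow> nat \<Rightarrow> bool" where
  "schur_partitionable n p \<longleftrightarrow> (\<exists>A. sum_free_partition n p A)"

definition schur :: "nat \<Rightarrow> nat" where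
  "schur n = (GREATEST p. schur_partitionable n p)"

definition S_template :: "nat \<Rightarrow> nat \<Rightarrow> (nat \<Rightarrow> nat set) \<Rightarrow> bool" where
  "S_template n p A \<longleftrightarrow> 0 < p \<and> 0 < n \<and> sum_free_partition n p A \<and>
     (\<forall>i\<in>{1..n-1}. \<forall>x\<in>A i. \<forall>y\<in>A i. x + y > p \<longrightarrow> x + y - p \<notin> A i)"

definition has_S_template :: "nat \<Rightarrow> nat \<Rightarrow> bool" where
  "has_S_template n w \<longleftrightarrow> (\<exists>A. S_template n w A)"

definition schur_plus :: "nat \<Rightarrow> nat" where
  "schur_plus n = (GREATEST w. has_S_template n w)"

end

theory Submission
  imports Defs "HOL-Library.Ramsey"
begin

(* Schur's theorem, that S(n) is finite, follows from Ramsey's theorem for triangles: colour a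
   pair x < y by the colour of y - x; a monochromatic triangle x < y < z gives
   (y - x) + (z - y) = z - x inside one colour.  An S-template is in particular a sum-free
   partition, so S+(n) <= S(n).  For the lower bound, take a sum-free partition of {1..m},
   m = S(n - 1), into n - 1 colours and add {m + 1..2m + 1} as the last colour: this interval is
   sum-free, and the other colours never wrap around since their sums stay below 2m + 1. *)

(* Colours are shifted to {..<n}, the colour set used by partn_lst. *)
lemma sum_free_partition_colouring:
  assumes "sum_free_partition n p A"
  obtains col where "\<And>d. d \<in> {1..p} \<Longrightarrow> col d < n \<and> d \<in> A (Suc (col d))"
proof
  fix d assume "d \<in> {1..p}"
  then obtain i where "i \<in> {1..n}" "d \<in> A i"
    using assms unfolding sum_free_partition_def by blast
  then have "i - 1 < n \<and> d \<in> A (Suc (i - 1))"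
    by auto
  then have "\<exists>j. j < n \<and> d \<in> A (Suc j)" ..
  then show "(SOME j. j < n \<and> d \<in> A (Suc j)) < n \<and> d \<in> A (Suc (SOME j. j < n \<and> d \<in> A (Suc j)))"
    by (rule someI_ex)
qed

lemma schur_partitionable_bounded: "\<exists>N. \<forall>p. schur_partitionable n p \<longrightarrow> p < N"
proof -
  obtain N :: nat where N: "partn_lst {..<N} (replicate n 3) 2"
    using ramsey_full by blast
  have "p < N" if A: "sum_free_partition n p A" for p A
  proof (rule ccontr)
    assume "\<not> p < N"
    obtain col where col: "\<And>d. d \<in> {1..p} \<Longrightarrow> col d < n \<and> d \<in> A (Suc (col d))"
      using sum_free_partition_colouring[OF A] by blast
    have diff: "y - x \<in> {1..p}" if "x < y" "y < N" for x y
      using that \<open>\<not> p < N\<close> by auto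
    define f where "f S = col (Max S - Min S)" for S :: "nat set"
    have f_pair: "f {x, y} = col (y - x)" if "x < y" for x y
      using that by (simp add: f_def max_def min_def)
    have "f \<in> nsets {..<N} 2 \<rightarrow> {..<n}"
      using col diff by (auto simp: ordered_nsets_2_eq f_pair)
    then obtain i H where i: "i < n" and "H \<in> nsets {..<N} 3" and mono: "f ` nsets H 2 \<subseteq> {i}"
      using partn_lstE[OF N] by (metis length_replicate nth_replicate)
    then obtain x y z where xyz: "H = {x, y, z}" "x < y" "y < z" "z < N"
      by (auto simp: ordered_nsets_3_eq)
    have "f S = i" if "S \<in> nsets H 2" for S
      using mono that by blast
    then have "f {x, y} = i" "f {y, z} = i" "f {x, z} = i"
      using xyz by auto
    then have cols: "col (y - x) = i" "col (z - y) = i" "col (z - x) = i"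
      using xyz by (simp_all add: f_pair)
    have mem: "b - a \<in> A (Suc (col (b - a)))" if "a < b" "b < N" for a b
      using col diff that by blast
    have "y - x \<in> A (Suc i)" "z - y \<in> A (Suc i)" "z - x \<in> A (Suc i)"
      using mem[of x y] mem[of y z] mem[of x z] cols xyz by simp_all
    moreover have "sum_free (A (Suc i))"
      using A i unfolding sum_free_partition_def by auto
    moreover have "(y - x) + (z - y) = z - x"
      using xyz by simp
    ultimately show False
      unfolding sum_free_def by metis
  qed
  then show ?thesis
    unfolding schur_partitionable_def by blast
qed

lemma schur_partitionable_0: "schur_partitionable n 0"
  unfolding schur_partitionable_def sum_free_partition_def sum_free_def
  by (rule exI[of _ "\<lambda>_. {}"]) auto

lemma schur_partitionable_schur: "schur_partitionable n (schur n)"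
  and schur_partitionable_le_schur: "schur_partitionable n p \<Longrightarrow> p \<le> schur n"
proof -
  obtain N where N: "\<And>p. schur_partitionable n p \<Longrightarrow> p \<le> N"
    using schur_partitionable_bounded[of n] less_imp_le by blast
  show "schur_partitionable n (schur n)"
    unfolding schur_def by (rule GreatestI_nat[of "schur_partitionable n", OF schur_partitionable_0 N])
  show "schur_partitionable n p \<Longrightarrow> p \<le> schur n"
    unfolding schur_def by (rule Greatest_le_nat[of "schur_partitionable n", OF _ N])
qed

lemma has_S_template_le_schur: "has_S_template n w \<Longrightarrow> w \<le> schur n"
  unfolding has_S_template_def S_template_def
  by (meson schur_partitionable_def schur_partitionable_le_schur)

lemma sum_free_atLeastAtMost: "b < 2 * a \<Longrightarrow> sum_free {a..b}"
  by (auto simp: sum_free_def)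

lemma sum_free_partition_extend:
  assumes B: "sum_free_partition k m B" and "m \<le> p" and "sum_free {m + 1..p}"
  shows "sum_free_partition (Suc k) p (B(Suc k := {m + 1..p}))"
  unfolding sum_free_partition_def
proof (intro conjI ballI impI)
  let ?A = "B(Suc k := {m + 1..p})"
  have B_sub: "B i \<subseteq> {1..m}" if "i \<in> {1..k}" for i
    using B that unfolding sum_free_partition_def by blast
  have "(\<Union>i\<in>{1..Suc k}. ?A i) = {m + 1..p} \<union> (\<Union>i\<in>{1..k}. B i)"
    by (auto simp: atLeastAtMostSuc_conv)
  also have "\<dots> = {1..p}"
    using B \<open>m \<le> p\<close> unfolding sum_free_partition_def by auto
  finally show "(\<Union>i\<in>{1..Suc k}. ?A i) = {1..p}" .
  fix i j assume i: "i \<in> {1..Suc k}"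
  show "sum_free (?A i)"
    using B i \<open>sum_free {m + 1..p}\<close> unfolding sum_free_partition_def
    by (cases "i = Suc k") auto
  assume j: "j \<in> {1..Suc k}" and "i \<noteq> j"
  show "?A i \<inter> ?A j = {}"
  proof (cases "i = Suc k \<or> j = Suc k")
    case True
    then show ?thesis
      using i j \<open>i \<noteq> j\<close> B_sub[of i] B_sub[of j] by (fastforce simp: subset_iff)
  next
    case False
    then show ?thesis
      using B i j \<open>i \<noteq> j\<close> unfolding sum_free_partition_def by simp
  qed
qed

lemma S_template_extend_by_interval:
  assumes "2 \<le> n" and B: "sum_free_partition (n - 1) m B"
  shows "S_template n (2 * m + 1) (B(n := {m + 1..2 * m + 1}))"
  unfolding S_template_def
proof (intro conjI ballI impI)
  have "sum_free_partition (Suc (n - 1)) (2 * m + 1) (B(Suc (n - 1) := {m + 1..2 * m + 1}))"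
    by (rule sum_free_partition_extend[OF B]) (simp_all add: sum_free_atLeastAtMost)
  moreover have "Suc (n - 1) = n"
    using \<open>2 \<le> n\<close> by simp
  ultimately show "sum_free_partition n (2 * m + 1) (B(n := {m + 1..2 * m + 1}))"
    by simp
  fix i x y
  assume i: "i \<in> {1..n - 1}"
    and "x \<in> (B(n := {m + 1..2 * m + 1})) i" "y \<in> (B(n := {m + 1..2 * m + 1})) i"
  moreover have "B i \<subseteq> {1..m}"
    using B i unfolding sum_free_partition_def by blast
  moreover have "i \<noteq> n"
    using i \<open>2 \<le> n\<close> by auto
  ultimately have "x \<le> m" "y \<le> m"
    by auto
  moreover assume "2 * m + 1 < x + y"
  ultimately show "x + y - (2 * m + 1) \<notin> (B(n := {m + 1..2 * m + 1})) i"
    by simp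
qed (use \<open>2 \<le> n\<close> in auto)

theorem proposition2p2:
  fixes n :: nat
  assumes "n \<ge> 2"
  shows "(\<exists>w. has_S_template n w \<and> (\<forall>w'. has_S_template n w' \<longrightarrow> w' \<le> w))
         \<and> 2 * schur (n - 1) + 1 \<le> schur_plus n \<and> schur_plus n \<le> schur n"
proof -
  obtain B where "sum_free_partition (n - 1) (schur (n - 1)) B"
    using schur_partitionable_schur unfolding schur_partitionable_def by blast
  then have lower: "has_S_template n (2 * schur (n - 1) + 1)"
    unfolding has_S_template_def using S_template_extend_by_interval[OF assms] by blast
  have upper: "\<And>w. has_S_template n w \<Longrightarrow> w \<le> schur n"
    by (rule has_S_template_le_schur)
  have "has_S_template n (schur_plus n)"
    unfolding schur_plus_def by (rule GreatestI_nat[of "has_S_template n", OF lower upper])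
  moreover have "\<And>w. has_S_template n w \<Longrightarrow> w \<le> schur_plus n"
    unfolding schur_plus_def by (rule Greatest_le_nat[of "has_S_template n", OF _ upper])
  ultimately show ?thesis
    using lower upper by blast
qed

end
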